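(* Let $(X,\leqslant)$ be a finite poset. For any tree-based enforcement scheme $(T,\phi)$ with $T=(X,E)$ and every $x\in X$, we have $\phi(x)\supseteq\phi_E(x)$.
   Context: For a digraph $G$, $x\rightsquigarrow_G y$ means there is a directed path from $x$ to $y$ in $G$ (with $x\rightsquigarrow_G x$ always). A derivation out-tree for $(X,\leqslant)$ is a spanning out-tree $T=(X,E)$ (rooted tree on vertex set $X$ with arcs oriented away from the root) such that $xy\in E$ implies $y<x$; its root $r$ is the maximum element of $X$. Define $\phi_E\colon X\to2^X$ by $\phi_E(r)=\{r\}$ and, for $x\neq r$, $\phi_E(x)=\{z\in X:\exists y\in X \text{ with } yz\in E,\ x\geqslant z,\ x\not\geqslant y\}$. A tree-based enforcement scheme is a pair $(T,\phi)$ with $T$ a derivation out-tree and $\phi\colon X\to2^X$ such that for all $x\in X$: $x\in\phi(x)$; if $u\leqslant x$ then some $z\in\phi(x)$ has $z\rightsquigarrow_T u$; if $u\not\leqslant x$ then no $z\in\phi(x)$ has $z\rightsquigarrow_T u$. *)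

theory Defs
  imports Main
begin

definition finite_poset :: "'a set \<Rightarrow> ('a \<Rightarrow> 'a \<Rightarrow> bool) \<Rightarrow> bool" where
  "finite_poset X le \<longleftrightarrow> finite X \<and>
     (\<forall>x\<in>X. le x x) \<and>
     (\<forall>x\<in>X. \<forall>y\<in>X. le x y \<and> le y x \<longrightarrow> x = y) \<and>
     (\<forall>x\<in>X. \<forall>y\<in>X. \<forall>z\<in>X. le x y \<and> le y z \<longrightarrow> le x z)"

definition reach :: "('a \<times> 'a) set \<Rightarrow> 'a \<Rightarrow> 'a \<Rightarrow> bool" where
  "reach E x y \<longleftrightarrow> (x, y) \<in> E\<^sup>*"

definition spanning_out_tree :: "'a set \<Rightarrow> ('a \<times> 'a) set \<Rightarrow> 'a \<Rightarrow> bool" where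
  "spanning_out_tree X E r \<longleftrightarrow> r \<in> X \<and> E \<subseteq> X \<times> X \<and>
     (\<forall>y. (y, r) \<notin> E) \<and>
     (\<forall>x\<in>X. x \<noteq> r \<longrightarrow> (\<exists>!y. (y, x) \<in> E)) \<and>
     (\<forall>x\<in>X. reach E r x)"

definition derivation_out_tree ::
  "'a set \<Rightarrow> ('a \<Rightarrow> 'a \<Rightarrow> bool) \<Rightarrow> ('a \<times> 'a) set \<Rightarrow> 'a \<Rightarrow> bool" where
  "derivation_out_tree X le E r \<longleftrightarrow> spanning_out_tree X E r \<and>
     (\<forall>(x, y)\<in>E. le y x \<and> y \<noteq> x)"

definition phiE :: "'a set \<Rightarrow> ('a \<Rightarrow> 'a \<Rightarrow> bool) \<Rightarrow> ('a \<times> 'a) set \<Rightarrow> 'a \<Rightarrow> 'a \<Rightarrow> 'a set" where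
  "phiE X le E r x = (if x = r then {r}
     else {z\<in>X. \<exists>y\<in>X. (y, z) \<in> E \<and> le z x \<and> \<not> le y x})"

definition tree_based_enforcement_scheme ::
  "'a set \<Rightarrow> ('a \<Rightarrow> 'a \<Rightarrow> bool) \<Rightarrow> ('a \<times> 'a) set \<Rightarrow> 'a \<Rightarrow> ('a \<Rightarrow> 'a set) \<Rightarrow> bool" where
  "tree_based_enforcement_scheme X le E r \<phi> \<longleftrightarrow> derivation_out_tree X le E r \<and>
     (\<forall>x\<in>X. \<phi> x \<subseteq> X \<and> x \<in> \<phi> x \<and>
        (\<forall>u\<in>X. le u x \<longrightarrow> (\<exists>z\<in>\<phi> x. reach E z u)) \<and>
        (\<forall>u\<in>X. \<not> le u x \<longrightarrow> (\<forall>z\<in>\<phi> x. \<not> reach E z u)))"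

end

theory Submission
  imports Defs
begin

(* Let z \<in> \<phi>_E(x) with parent y, so z \<le> x but y \<not>\<le> x. Some w \<in> \<phi>(x) reaches z.
  Since z has y as its only in-neighbour, w either is z or reaches y; the latter is
  excluded because y \<not>\<le> x. Hence z = w \<in> \<phi>(x). *)

lemma rtrancl_unique_predecessor:
  assumes "(w, z) \<in> E\<^sup>*" and "\<And>p. (p, z) \<in> E \<Longrightarrow> p = y"
  shows "w = z \<or> (w, y) \<in> E\<^sup>*"
  using assms(1)
proof (cases rule: rtranclE)
  case (step p)
  then show ?thesis using assms(2) by blast
qed simp

lemma spanning_out_tree_parent_unique:
  assumes "spanning_out_tree X E r" and "(y, z) \<in> E" and "(p, z) \<in> E"
  shows "p = y"
proof -
  have "z \<in> X" and "z \<noteq> r"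
    using assms(1,2) unfolding spanning_out_tree_def by auto
  then have "\<exists>!q. (q, z) \<in> E"
    using assms(1) unfolding spanning_out_tree_def by blast
  then show ?thesis using assms(2,3) by blast
qed

lemma enforcement_scheme_contains_child:
  assumes scheme: "tree_based_enforcement_scheme X le E r \<phi>"
    and "x \<in> X" and "y \<in> X" and "z \<in> X"
    and arc: "(y, z) \<in> E" and "le z x" and "\<not> le y x"
  shows "z \<in> \<phi> x"
proof -
  have tree: "spanning_out_tree X E r"
    using scheme unfolding tree_based_enforcement_scheme_def derivation_out_tree_def by blast
  obtain w where w: "w \<in> \<phi> x" "(w, z) \<in> E\<^sup>*"
    using scheme assms(2,4,6) unfolding tree_based_enforcement_scheme_def reach_def by blast
  have "(w, y) \<notin> E\<^sup>*"
    using scheme assms(2,3,7) w(1) unfolding tree_based_enforcement_scheme_def reach_def by blast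
  moreover have "w = z \<or> (w, y) \<in> E\<^sup>*"
    using w(2) spanning_out_tree_parent_unique[OF tree arc] by (rule rtrancl_unique_predecessor)
  ultimately show ?thesis using w(1) by blast
qed

theorem lemma3:
  fixes X :: "'a set" and le :: "'a \<Rightarrow> 'a \<Rightarrow> bool"
    and E :: "('a \<times> 'a) set" and r :: 'a and \<phi> :: "'a \<Rightarrow> 'a set"
  assumes "finite_poset X le"
    and "tree_based_enforcement_scheme X le E r \<phi>"
    and "x \<in> X"
  shows "phiE X le E r x \<subseteq> \<phi> x"
proof (cases "x = r")
  case True
  then show ?thesis
    using assms(2,3) unfolding tree_based_enforcement_scheme_def phiE_def by simp
next
  case False
  then show ?thesis
    using enforcement_scheme_contains_child[OF assms(2,3)] by (auto simp: phiE_def)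
qed

end
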